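(* Let $N(x)=\frac{1}{\sqrt{2\pi}}\int_{-\infty}^x e^{-t^2/2}\,dt$ be the standard normal cumulative distribution function. For $\alpha>0$ define \[ \chi_\alpha(x) := N\Big(\tfrac{\alpha}{2}\big(x-\tfrac{1}{x}\big)\Big) - e^{\alpha^2/2}\, N\Big(-\tfrac{\alpha}{2}\big(x+\tfrac{1}{x}\big)\Big), \qquad x>0. \] Fix $S>0$, $X>0$, $T>0$ with $X\neq S$, and for $\sigma>0$ let \[ \mathscr{C}(\sigma) := S\,N(d_1) - X\,N(d_2),\qquad d_1=\frac{\log(S/X)}{\sigma\sqrt{T}}+\frac{\sigma\sqrt{T}}{2},\quad d_2=\frac{\log(S/X)}{\sigma\sqrt{T}}-\frac{\sigma\sqrt{T}}{2}. \] Put $\alpha:=\sqrt{2\,|\log(S/X)|}$. Then for all $\sigma>0$, \[ \mathscr{C}(\sigma)=\begin{cases} S\,\chi_\alpha\!\left(\frac{\sigma\sqrt{T}}{\alpha}\right) & \text{if } X>S,\\[2mm] S-X+X\,\chi_\alpha\!\left(\frac{\sigma\sqrt{T}}{\alpha}\right) & \text{if } X<S.\end{cases} \]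
   Context: $\mathscr{C}(\sigma)$ is the Black–Scholes price of a European call as a function of the volatility $\sigma$, where $S$ is the value of the underlying, $X$ the present value of the strike, and $T$ the time to maturity. *)

theory Defs
  imports "HOL-Analysis.Analysis"
begin

definition Ncdf :: "real \<Rightarrow> real" where
  "Ncdf x = integral {..x} (\<lambda>t. exp (- (t^2) / 2)) / sqrt (2 * pi)"

definition chi :: "real \<Rightarrow> real \<Rightarrow> real" where
  "chi \<alpha> x = Ncdf (\<alpha> / 2 * (x - 1 / x)) - exp (\<alpha>^2 / 2) * Ncdf (- (\<alpha> / 2) * (x + 1 / x))"

definition BS_call :: "real \<Rightarrow> real \<Rightarrow> real \<Rightarrow> real \<Rightarrow> real" where
  "BS_call S X T \<sigma> =
     (let d1 = ln (S / X) / (\<sigma> * sqrt T) + \<sigma> * sqrt T / 2;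
          d2 = ln (S / X) / (\<sigma> * sqrt T) - \<sigma> * sqrt T / 2
      in S * Ncdf d1 - X * Ncdf d2)"

end

theory Submission
  imports Defs "HOL-Probability.Probability"
begin

text \<open>
  With \<open>L = ln (S / X)\<close> and \<open>s = \<sigma> \<surd>T\<close>, the choice \<open>\<alpha>\<^sup>2 = 2 \<bar>L\<bar>\<close> turns the
  arguments of \<open>\<chi>\<^sub>\<alpha>(s / \<alpha>)\<close> into \<open>s/2 - \<bar>L\<bar>/s\<close> and \<open>-(s/2 + \<bar>L\<bar>/s)\<close>, and its weight
  \<open>exp (\<alpha>\<^sup>2/2)\<close> into \<open>exp \<bar>L\<bar>\<close>. For \<open>X > S\<close> (\<open>L < 0\<close>) these are exactly \<open>d\<^sub>1\<close>, \<open>d\<^sub>2\<close>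
  and \<open>X / S\<close>; for \<open>X < S\<close> they are \<open>-d\<^sub>2\<close>, \<open>-d\<^sub>1\<close> and \<open>S / X\<close>, and the symmetry
  \<open>N(-y) = 1 - N(y)\<close> of the normal distribution produces the intrinsic value \<open>S - X\<close>.
\<close>

lemma gaussian_has_integral_UNIV:
  "((\<lambda>t::real. exp (- (t^2) / 2)) has_integral sqrt (2 * pi)) UNIV"
proof -
  have "(\<lambda>t::real. exp (- (t^2) / 2)) = (\<lambda>t. sqrt (2 * pi) * std_normal_density t)"
    by (auto simp: std_normal_density_def)
  moreover have "(std_normal_density has_integral 1) UNIV"
    using has_integral_integral_lborel[OF integrable_normal_density[of 1 0]]
      integral_normal_density[of 0 1]
    by simp
  ultimately show ?thesis
    by (simp add: has_integral_mult_right_iff)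
qed

lemma gaussian_absolutely_integrable_on:
  assumes "A \<in> sets lebesgue"
  shows "(\<lambda>t::real. exp (- (t^2) / 2)) absolutely_integrable_on A"
proof -
  have "(\<lambda>t::real. exp (- (t^2) / 2)) absolutely_integrable_on UNIV"
    using gaussian_has_integral_UNIV by (intro nonnegative_absolutely_integrable_1) auto
  then show ?thesis
    using set_integrable_subset assms by blast
qed

lemma Ncdf_uminus: "Ncdf (- y) = 1 - Ncdf y"
proof -
  define f where "f = (\<lambda>t::real. exp (- (t^2) / 2))"
  have f_abs: "f absolutely_integrable_on A" if "A \<in> sets lebesgue" for A
    unfolding f_def using gaussian_absolutely_integrable_on[OF that] .
  have f_integral: "(f has_integral integral A f) A" if "A \<in> sets lebesgue" for A
    using f_abs[OF that] by (intro integrable_integral set_lebesgue_integral_eq_integral(1))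
  have "uminus ` {y..} \<subseteq> {..-y}" "uminus ` {..-y} \<subseteq> {y..}"
    by auto
  then have "integral {y..} (\<lambda>t. f (- t)) = integral {..-y} f"
    using has_absolute_integral_reflect_real[of "{y..}" "{..-y}" f "integral {..-y} f"]
      f_abs[of "{..-y}"]
    by simp
  moreover have "(\<lambda>t. f (- t)) = f"
    by (simp add: f_def)
  ultimately have reflect: "integral {y..} f = integral {..-y} f"
    by simp
  have "{..y} \<inter> {y..} = {y}"
    by auto
  then have "(f has_integral (integral {..y} f + integral {y..} f)) ({..y} \<union> {y..})"
    by (intro has_integral_Un f_integral) simp_all
  moreover have "{..y} \<union> {y..} = UNIV"
    by auto
  ultimately have "integral {..y} f + integral {y..} f = sqrt (2 * pi)"
    using gaussian_has_integral_UNIV has_integral_unique unfolding f_def by metis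
  then show ?thesis
    unfolding Ncdf_def f_def[symmetric] reflect
    by (simp add: field_simps)
qed

lemma chi_sqrt_abs:
  fixes L s :: real
  assumes "L \<noteq> 0" "s > 0"
  defines "\<alpha> \<equiv> sqrt (2 * \<bar>L\<bar>)"
  shows "chi \<alpha> (s / \<alpha>) = Ncdf (s / 2 - \<bar>L\<bar> / s) - exp \<bar>L\<bar> * Ncdf (- (s / 2 + \<bar>L\<bar> / s))"
proof -
  have "\<alpha> > 0" "\<alpha>^2 = 2 * \<bar>L\<bar>"
    using assms by auto
  then have arg1: "\<alpha> / 2 * (s / \<alpha> - 1 / (s / \<alpha>)) = s / 2 - \<bar>L\<bar> / s"
    and arg2: "- (\<alpha> / 2) * (s / \<alpha> + 1 / (s / \<alpha>)) = - (s / 2 + \<bar>L\<bar> / s)"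
    and exponent: "\<alpha>^2 / 2 = \<bar>L\<bar>"
    using \<open>s > 0\<close> by (simp_all add: field_simps power2_eq_square)
  show ?thesis
    unfolding chi_def arg1 arg2 exponent ..
qed

lemma chi_sqrt_neg:
  fixes L s :: real
  assumes "L < 0" "s > 0"
  defines "\<alpha> \<equiv> sqrt (2 * \<bar>L\<bar>)"
  shows "chi \<alpha> (s / \<alpha>) = Ncdf (L / s + s / 2) - exp (- L) * Ncdf (L / s - s / 2)"
proof -
  have "L \<noteq> 0"
    using \<open>L < 0\<close> by simp
  have d1: "s / 2 - \<bar>L\<bar> / s = L / s + s / 2"
    and d2: "- (s / 2 + \<bar>L\<bar> / s) = L / s - s / 2"
    and weight: "exp \<bar>L\<bar> = exp (- L)"
    using \<open>L < 0\<close> by simp_all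
  show ?thesis
    unfolding \<alpha>_def chi_sqrt_abs[OF \<open>L \<noteq> 0\<close> \<open>s > 0\<close>] d1 d2 weight ..
qed

lemma chi_sqrt_pos:
  fixes L s :: real
  assumes "L > 0" "s > 0"
  defines "\<alpha> \<equiv> sqrt (2 * \<bar>L\<bar>)"
  shows "chi \<alpha> (s / \<alpha>) = 1 - exp L + exp L * Ncdf (L / s + s / 2) - Ncdf (L / s - s / 2)"
proof -
  have "L \<noteq> 0"
    using \<open>L > 0\<close> by simp
  have d2: "s / 2 - \<bar>L\<bar> / s = - (L / s - s / 2)"
    and d1: "- (s / 2 + \<bar>L\<bar> / s) = - (L / s + s / 2)"
    and weight: "exp \<bar>L\<bar> = exp L"
    using \<open>L > 0\<close> by simp_all
  show ?thesis
    unfolding \<alpha>_def chi_sqrt_abs[OF \<open>L \<noteq> 0\<close> \<open>s > 0\<close>] d1 d2 weight Ncdf_uminus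
    by (simp add: algebra_simps)
qed

theorem proposition2:
  fixes S X T \<sigma> :: real
  assumes "S > 0" "X > 0" "T > 0" "X \<noteq> S" "\<sigma> > 0"
  defines "\<alpha> \<equiv> sqrt (2 * \<bar>ln (S / X)\<bar>)"
  shows "BS_call S X T \<sigma> =
           (if X > S then S * chi \<alpha> (\<sigma> * sqrt T / \<alpha>)
            else S - X + X * chi \<alpha> (\<sigma> * sqrt T / \<alpha>))"
proof -
  define L where "L = ln (S / X)"
  define s where "s = \<sigma> * sqrt T"
  have "s > 0"
    using assms by (simp add: s_def)
  have "S = X * exp L"
    using assms by (simp add: L_def)
  have BS: "BS_call S X T \<sigma> = S * Ncdf (L / s + s / 2) - X * Ncdf (L / s - s / 2)"
    unfolding BS_call_def L_def s_def Let_def ..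
  show ?thesis
  proof (cases "X > S")
    case True
    then have "L < 0"
      using assms by (simp add: L_def ln_div)
    have "S * chi \<alpha> (s / \<alpha>) = BS_call S X T \<sigma>"
      unfolding BS \<alpha>_def L_def [symmetric] chi_sqrt_neg[OF \<open>L < 0\<close> \<open>s > 0\<close>]
      using \<open>S = X * exp L\<close> by (simp add: algebra_simps exp_minus)
    then show ?thesis
      using True by (simp add: s_def)
  next
    case False
    then have "L > 0"
      using assms by (simp add: L_def ln_div)
    have "S - X + X * chi \<alpha> (s / \<alpha>) = BS_call S X T \<sigma>"
      unfolding BS \<alpha>_def L_def [symmetric] chi_sqrt_pos[OF \<open>L > 0\<close> \<open>s > 0\<close>]
      using \<open>S = X * exp L\<close> by (simp add: algebra_simps)
    then show ?thesis
      using False by (simp add: s_def)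
  qed
qed

end
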